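(* Let $G'=(V',W',E')$ be a bipartite graph with $|V'|=|W'|=k$ and maximum matching size $\mathrm{OPT}'$, let $b\ge1$ be an integer, and let $\rho\ge1$. Form $G=(V,W,E)$ by taking $b$ copies of each vertex of $V'$, setting $W=W'$ with every good having supply $b$, and connecting every copy of $v'$ to $w'$ whenever $(v',w')\in E'$. Let $M^*$ be a many-to-one matching in $G$ (each vertex of $V$ matched to at most one good, each good matched to at most $b$ vertices) with $|M^*|\ge b\,\mathrm{OPT}'/\rho$. For each $v'\in V'$ independently, choose one of its $b$ copies uniformly at random and take that copy's edge in $M^*$ (if any), viewed as an edge of $G'$; if several chosen edges share a good, keep only one of them. Then the resulting matching of $G'$ has expected size at least $\mathrm{OPT}'/(3\rho)$. *)

theory Defs
  imports Complex_Main "HOL-Library.FuncSet"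
begin

definition is_matching :: "('a \<times> 'b) set \<Rightarrow> ('a \<times> 'b) set \<Rightarrow> bool" where
  "is_matching E M \<longleftrightarrow> M \<subseteq> E \<and>
     (\<forall>v. card {w. (v, w) \<in> M} \<le> 1) \<and> (\<forall>w. card {v. (v, w) \<in> M} \<le> 1)"

definition max_matching_size :: "('a \<times> 'b) set \<Rightarrow> nat" where
  "max_matching_size E = Max (card ` {M. is_matching E M})"

definition blowup_edges :: "nat \<Rightarrow> ('a \<times> 'b) set \<Rightarrow> (('a \<times> nat) \<times> 'b) set" where
  "blowup_edges b E = {((v, i), w). (v, w) \<in> E \<and> i < b}"

definition is_many_to_one_matching ::
  "nat \<Rightarrow> ('c \<times> 'b) set \<Rightarrow> ('c \<times> 'b) set \<Rightarrow> bool" where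
  "is_many_to_one_matching b E M \<longleftrightarrow> M \<subseteq> E \<and>
     (\<forall>v. card {w. (v, w) \<in> M} \<le> 1) \<and> (\<forall>w. card {v. (v, w) \<in> M} \<le> b)"

definition chosen_edges :: "'a set \<Rightarrow> (('a \<times> nat) \<times> 'b) set \<Rightarrow> ('a \<Rightarrow> nat) \<Rightarrow> ('a \<times> 'b) set" where
  "chosen_edges V M c = {(v, w). v \<in> V \<and> ((v, c v), w) \<in> M}"

(* Size of the resulting matching after keeping only one edge per shared good:
   the number of distinct goods covered by the chosen edges. *)
definition rounded_size :: "'a set \<Rightarrow> (('a \<times> nat) \<times> 'b) set \<Rightarrow> ('a \<Rightarrow> nat) \<Rightarrow> nat" where
  "rounded_size V M c = card (snd ` chosen_edges V M c)"

(* Expected size when each v in V independently picks a copy uniformly from {0..<b}: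
   uniform average over all choice functions in PiE V (\<lambda>_. {..<b}). *)
definition expected_rounded_size :: "nat \<Rightarrow> 'a set \<Rightarrow> (('a \<times> nat) \<times> 'b) set \<Rightarrow> real" where
  "expected_rounded_size b V M =
     (\<Sum>c\<in>PiE V (\<lambda>_. {..<b}). real (rounded_size V M c)) / real (card (PiE V (\<lambda>_. {..<b})))"

end

theory Submission
  imports Defs
begin

text \<open>
  Fix a good \<open>w\<close> and let \<open>n\<^sub>v\<close> be the number of copies of \<open>v\<close> that \<open>M\<^sup>*\<close> matches to \<open>w\<close>;
  their total \<open>d\<^sub>w\<close> is at most the capacity \<open>b\<close>. The good \<open>w\<close> survives the rounding unless
  every \<open>v\<close> picks one of its other copies, so it is covered with probability
  \<open>1 - \<Prod>\<^sub>v (1 - n\<^sub>v/b)\<close>. Truncating the inclusion-exclusion expansion after the quadratic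
  term and using \<open>\<Sum>\<^sub>v n\<^sub>v/b \<le> 1\<close>, this is at least \<open>d\<^sub>w/(2b)\<close>. Summing over the goods gives
  an expected size of at least \<open>|M\<^sup>*|/(2b) \<ge> OPT'/(2\<rho>)\<close>; the capacity of the goods is the
  only property of \<open>M\<^sup>*\<close> that is needed.
\<close>

lemma prod_one_minus_le_quadratic:
  fixes x :: "'a \<Rightarrow> 'b::linordered_field"
  assumes "finite S" and "\<And>v. v \<in> S \<Longrightarrow> 0 \<le> x v" and "\<And>v. v \<in> S \<Longrightarrow> x v \<le> 1"
  shows "(\<Prod>v\<in>S. 1 - x v) \<le> 1 - sum x S + (sum x S)\<^sup>2 / 2"
  using assms
proof (induction S rule: finite_induct)
  case empty
  then show ?case by simp
next
  case (insert a F)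
  define s where "s = sum x F"
  define y where "y = x a"
  have "0 \<le> s" unfolding s_def using insert.prems by (simp add: sum_nonneg)
  have y: "0 \<le> y" "y \<le> 1" using insert.prems unfolding y_def by auto
  have "(\<Prod>v\<in>insert a F. 1 - x v) = (1 - y) * (\<Prod>v\<in>F. 1 - x v)"
    using insert.hyps y_def by simp
  also have "\<dots> \<le> (1 - y) * (1 - s + s\<^sup>2 / 2)"
    using insert y unfolding s_def by (intro mult_left_mono) auto
  also have "\<dots> = 1 - (y + s) + (y + s)\<^sup>2 / 2 - (y\<^sup>2 / 2 + y * s\<^sup>2 / 2)"
    by (simp add: field_simps power2_eq_square)
  also have "\<dots> \<le> 1 - (y + s) + (y + s)\<^sup>2 / 2"
  proof -
    have "0 \<le> y * s\<^sup>2" "0 \<le> y\<^sup>2" using y by auto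
    then show ?thesis by linarith
  qed
  finally show ?case using insert.hyps s_def y_def by simp
qed

lemma half_sum_le_one_minus_prod:
  fixes x :: "'a \<Rightarrow> 'b::linordered_field"
  assumes "finite S" and "\<And>v. v \<in> S \<Longrightarrow> 0 \<le> x v" and "\<And>v. v \<in> S \<Longrightarrow> x v \<le> 1"
    and "sum x S \<le> 1"
  shows "sum x S / 2 \<le> 1 - (\<Prod>v\<in>S. 1 - x v)"
proof -
  have "0 \<le> sum x S" using assms(2) by (simp add: sum_nonneg)
  then have "(sum x S)\<^sup>2 \<le> sum x S"
    using assms(4) mult_left_le by (auto simp: power2_eq_square)
  moreover have "(\<Prod>v\<in>S. 1 - x v) \<le> 1 - sum x S + (sum x S)\<^sup>2 / 2"
    using assms(1-3) by (rule prod_one_minus_le_quadratic)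
  ultimately show ?thesis by (simp add: field_simps)
qed

lemma card_PiE_avoiding:
  assumes "finite V" and "finite S" and "\<And>v. v \<in> V \<Longrightarrow> A v \<subseteq> S"
  shows "card {c \<in> PiE V (\<lambda>_. S). \<forall>v\<in>V. c v \<notin> A v} = (\<Prod>v\<in>V. card S - card (A v))"
proof -
  have "{c \<in> PiE V (\<lambda>_. S). \<forall>v\<in>V. c v \<notin> A v} = PiE V (\<lambda>v. S - A v)"
    by (auto simp: PiE_iff extensional_def)
  also have "card \<dots> = (\<Prod>v\<in>V. card (S - A v))"
    using assms(1) by (rule card_PiE)
  also have "\<dots> = (\<Prod>v\<in>V. card S - card (A v))"
    using assms by (intro prod.cong refl) (meson card_Diff_subset finite_subset)
  finally show ?thesis .
qed

lemma hitting_fraction_PiE: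
  assumes "finite V" and "finite S" and "S \<noteq> {}" and "\<And>v. v \<in> V \<Longrightarrow> A v \<subseteq> S"
  shows "real (card {c \<in> PiE V (\<lambda>_. S). \<exists>v\<in>V. c v \<in> A v}) / real (card (PiE V (\<lambda>_. S)))
           = 1 - (\<Prod>v\<in>V. 1 - real (card (A v)) / real (card S))"
proof -
  define P where "P = PiE V (\<lambda>_. S)"
  define H where "H = {c \<in> P. \<exists>v\<in>V. c v \<in> A v}"
  have "finite P" unfolding P_def using assms(1,2) by (simp add: finite_PiE)
  have cardP: "real (card P) = (\<Prod>v\<in>V. real (card S))"
    unfolding P_def using assms(1) by (simp add: card_PiE)
  have "card S > 0" using assms(2,3) by (simp add: card_gt_0_iff)
  have "card (A v) \<le> card S" if "v \<in> V" for v
    using assms(2,4) that by (simp add: card_mono)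
  moreover have "P - H = {c \<in> P. \<forall>v\<in>V. c v \<notin> A v}"
    unfolding H_def by blast
  ultimately have "real (card (P - H)) = (\<Prod>v\<in>V. real (card S) - real (card (A v)))"
    using card_PiE_avoiding[OF assms(1,2,4)] unfolding P_def
    by (simp add: of_nat_diff)
  moreover have "real (card H) = real (card P) - real (card (P - H))"
    using \<open>finite P\<close> by (simp add: H_def card_Diff_subset of_nat_diff card_mono)
  ultimately have "real (card H) / real (card P)
      = 1 - (\<Prod>v\<in>V. real (card S) - real (card (A v))) / (\<Prod>v\<in>V. real (card S))"
    using \<open>card S > 0\<close> cardP by (simp add: diff_divide_distrib)
  also have "(\<Prod>v\<in>V. real (card S) - real (card (A v))) / (\<Prod>v\<in>V. real (card S))
      = (\<Prod>v\<in>V. 1 - real (card (A v)) / real (card S))"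
    using \<open>card S > 0\<close> by (simp only: prod_dividef[symmetric]) (simp add: diff_divide_distrib)
  finally show ?thesis unfolding H_def P_def .
qed

lemma hitting_fraction_PiE_ge:
  assumes "finite V" and "finite S" and "S \<noteq> {}" and "\<And>v. v \<in> V \<Longrightarrow> A v \<subseteq> S"
    and "(\<Sum>v\<in>V. card (A v)) \<le> card S"
  shows "real (\<Sum>v\<in>V. card (A v)) / (2 * real (card S))
           \<le> real (card {c \<in> PiE V (\<lambda>_. S). \<exists>v\<in>V. c v \<in> A v}) / real (card (PiE V (\<lambda>_. S)))"
proof -
  define x where "x v = real (card (A v)) / real (card S)" for v
  have "card S > 0" using assms(2,3) by (simp add: card_gt_0_iff)
  have "x v \<le> 1" if "v \<in> V" for v
    using assms(2,4) that \<open>card S > 0\<close> by (simp add: x_def card_mono)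
  moreover have "sum x V = real (\<Sum>v\<in>V. card (A v)) / real (card S)"
    by (simp add: x_def sum_divide_distrib)
  moreover have "sum x V \<le> 1"
    using assms(5) \<open>card S > 0\<close> by (simp add: \<open>sum x V = _\<close> flip: of_nat_sum)
  ultimately have "real (\<Sum>v\<in>V. card (A v)) / (2 * real (card S)) \<le> 1 - (\<Prod>v\<in>V. 1 - x v)"
    using half_sum_le_one_minus_prod[of V x] assms(1) by (simp add: x_def)
  then show ?thesis
    using hitting_fraction_PiE[OF assms(1-4)] by (simp add: x_def)
qed

lemma sum_card_filter_swap:
  assumes "finite A" and "finite B"
  shows "(\<Sum>a\<in>A. card {b \<in> B. P a b}) = (\<Sum>b\<in>B. card {a \<in> A. P a b})"
proof -
  have "(\<Sum>a\<in>A. card {b \<in> B. P a b}) = (\<Sum>a\<in>A. \<Sum>b\<in>B. if P a b then 1 else 0)"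
    using assms by (simp add: sum.If_cases Int_def)
  also have "\<dots> = (\<Sum>b\<in>B. \<Sum>a\<in>A. if P a b then 1 else 0)"
    by (rule sum.swap)
  also have "\<dots> = (\<Sum>b\<in>B. card {a \<in> A. P a b})"
    using assms by (simp add: sum.If_cases Int_def)
  finally show ?thesis .
qed

lemma rounded_size_eq_card_hit_goods:
  assumes "snd ` M \<subseteq> W"
  shows "rounded_size V M c = card {w \<in> W. \<exists>v\<in>V. ((v, c v), w) \<in> M}"
proof -
  have "snd ` chosen_edges V M c = {w \<in> W. \<exists>v\<in>V. ((v, c v), w) \<in> M}"
    using assms unfolding chosen_edges_def by force
  then show ?thesis unfolding rounded_size_def by simp
qed

lemma expected_rounded_size_eq_sum_hitting_fractions:
  assumes "finite V" and "finite W" and "snd ` M \<subseteq> W"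
  shows "expected_rounded_size b V M
    = (\<Sum>w\<in>W. real (card {c \<in> PiE V (\<lambda>_. {..<b}). \<exists>v\<in>V. ((v, c v), w) \<in> M})
                  / real (card (PiE V (\<lambda>_. {..<b}))))"
proof -
  define P where "P = PiE V (\<lambda>_. {..<b})"
  have "finite P" unfolding P_def using assms(1) by (simp add: finite_PiE)
  have "(\<Sum>c\<in>P. rounded_size V M c) = (\<Sum>c\<in>P. card {w \<in> W. \<exists>v\<in>V. ((v, c v), w) \<in> M})"
    using assms(3) by (simp add: rounded_size_eq_card_hit_goods)
  also have "\<dots> = (\<Sum>w\<in>W. card {c \<in> P. \<exists>v\<in>V. ((v, c v), w) \<in> M})"
    using \<open>finite P\<close> assms(2) by (rule sum_card_filter_swap)
  finally show ?thesis
    unfolding expected_rounded_size_def P_def[symmetric]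
    by (simp only: sum_divide_distrib[symmetric] of_nat_sum[symmetric])
qed

lemma card_eq_sum_card_right_fibres:
  assumes "finite M" and "finite W" and "snd ` M \<subseteq> W"
  shows "card M = (\<Sum>w\<in>W. card {u. (u, w) \<in> M})"
proof -
  have "card {u. (u, w) \<in> M} = card {x \<in> M. snd x = w}" for w
  proof -
    have "{x \<in> M. snd x = w} = (\<lambda>u. (u, w)) ` {u. (u, w) \<in> M}" by force
    then show ?thesis by (simp add: card_image inj_on_def)
  qed
  then show ?thesis
    using sum.group[OF assms, of "\<lambda>_. 1::nat"] by simp
qed

lemma expected_rounded_size_ge_half_card:
  assumes "finite V" and "finite W" and "b \<ge> 1" and M: "M \<subseteq> (V \<times> {..<b}) \<times> W"
    and deg_le: "\<And>w. card {u. (u, w) \<in> M} \<le> b"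
  shows "real (card M) / (2 * real b) \<le> expected_rounded_size b V M"
proof -
  define A where "A w v = {i \<in> {..<b}. ((v, i), w) \<in> M}" for w v
  have "finite M" using assms(1,2) M by (auto intro: finite_subset)
  have "snd ` M \<subseteq> W" using M by auto
  have deg: "(\<Sum>v\<in>V. card (A w v)) = card {u. (u, w) \<in> M}" for w
  proof -
    have "{u. (u, w) \<in> M} = Sigma V (A w)" using M by (auto simp: A_def)
    then show ?thesis using assms(1) by (simp add: A_def)
  qed
  have hits: "{c \<in> PiE V (\<lambda>_. {..<b}). \<exists>v\<in>V. ((v, c v), w) \<in> M}
      = {c \<in> PiE V (\<lambda>_. {..<b}). \<exists>v\<in>V. c v \<in> A w v}" for w
    by (auto simp: A_def PiE_iff)
  have "real (card M) / (2 * real b) = (\<Sum>w\<in>W. real (card {u. (u, w) \<in> M}) / (2 * real b))"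
    using card_eq_sum_card_right_fibres[OF \<open>finite M\<close> assms(2) \<open>snd ` M \<subseteq> W\<close>]
    by (simp add: sum_divide_distrib)
  also have "\<dots> \<le> (\<Sum>w\<in>W. real (card {c \<in> PiE V (\<lambda>_. {..<b}). \<exists>v\<in>V. ((v, c v), w) \<in> M})
                          / real (card (PiE V (\<lambda>_. {..<b}))))"
  proof (rule sum_mono)
    fix w
    have "real (\<Sum>v\<in>V. card (A w v)) / (2 * real (card {..<b}))
        \<le> real (card {c \<in> PiE V (\<lambda>_. {..<b}). \<exists>v\<in>V. c v \<in> A w v})
            / real (card (PiE V (\<lambda>_. {..<b})))"
      using assms(1,3) deg[of w] deg_le[of w]
      by (intro hitting_fraction_PiE_ge) (auto simp: A_def lessThan_empty_iff)
    then show "real (card {u. (u, w) \<in> M}) / (2 * real b)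
        \<le> real (card {c \<in> PiE V (\<lambda>_. {..<b}). \<exists>v\<in>V. ((v, c v), w) \<in> M})
            / real (card (PiE V (\<lambda>_. {..<b})))"
      by (simp only: deg hits card_lessThan)
  qed
  also have "\<dots> = expected_rounded_size b V M"
    using assms(1,2) \<open>snd ` M \<subseteq> W\<close> by (rule expected_rounded_size_eq_sum_hitting_fractions[symmetric])
  finally show ?thesis .
qed

theorem lemma3:
  fixes V' :: "'a set" and W' :: "'b set" and E' :: "('a \<times> 'b) set"
    and k b :: nat and \<rho> :: real and Mstar :: "(('a \<times> nat) \<times> 'b) set"
  assumes "finite V'" and "finite W'"
    and "card V' = k" and "card W' = k"
    and "E' \<subseteq> V' \<times> W'"
    and "b \<ge> 1" and "\<rho> \<ge> 1"
    and "is_many_to_one_matching b (blowup_edges b E') Mstar"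
    and "card Mstar \<ge> real b * real (max_matching_size E') / \<rho>"
  shows "expected_rounded_size b V' Mstar \<ge> real (max_matching_size E') / (3 * \<rho>)"
proof -
  define OPT where "OPT = real (max_matching_size E')"
  have "Mstar \<subseteq> (V' \<times> {..<b}) \<times> W'"
    using assms(5,8) unfolding is_many_to_one_matching_def blowup_edges_def by auto
  moreover have "card {u. (u, w) \<in> Mstar} \<le> b" for w
    using assms(8) unfolding is_many_to_one_matching_def by blast
  ultimately have "real (card Mstar) / (2 * real b) \<le> expected_rounded_size b V' Mstar"
    using assms(1,2,6) by (intro expected_rounded_size_ge_half_card)
  moreover have "real b * OPT / \<rho> / (2 * real b) \<le> real (card Mstar) / (2 * real b)"
    using assms(6,9) unfolding OPT_def by (intro divide_right_mono) auto
  moreover have "real b * OPT / \<rho> / (2 * real b) = OPT / (2 * \<rho>)"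
    using assms(6) by simp
  moreover have "OPT / (3 * \<rho>) \<le> OPT / (2 * \<rho>)"
    using assms(7) unfolding OPT_def by (intro divide_left_mono) auto
  ultimately show ?thesis unfolding OPT_def by linarith
qed

end
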